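(* Let $L>0$, $\epsilon>0$, $x\in\mathbb{R}$, and set $t=\sqrt{2\epsilon/L}$. Suppose $f,g:[x-t,x+t]\to\mathbb{R}$ are such that (a) $g$ is concave and differentiable on $[x-t,x+t]$, (b) $f'$ exists and is $L$-Lipschitz on $[x-t,x+t]$, and (c) $|f(a)-g(a)|\le\epsilon$ for all $a\in\{x-t,x,x+t\}$. Then $|f'(x)-g'(x)|\le2\sqrt{2L\epsilon}$. *)

theory Defs
  imports "HOL-Analysis.Analysis"
begin

end

theory Submission
  imports Defs
begin

(* Over a step h, the Lipschitz bound on f' makes f agree with its tangent line at x up to L h^2,
   while concavity keeps g below its tangent line at x.  Comparing the increments of f and g
   from x to x + h and from x - h to x, each side only loses the sampling error 2 epsilon, so
   |f'(x) - g'(x)| h <= L h^2 + 2 epsilon; the choice h = sqrt (2 epsilon / L) balances both terms. *)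

lemma concave_on_imp_below_tangent:
  fixes g :: "real \<Rightarrow> real"
  assumes "concave_on A g" "connected A" "c \<in> interior A" "y \<in> A"
    and "(g has_field_derivative g') (at c within A)"
  shows "g y - g c \<le> g' * (y - c)"
proof -
  have convex: "convex_on A (\<lambda>z. - g z)"
    using assms(1) by (simp add: concave_on_def)
  have deriv: "((\<lambda>z. - g z) has_field_derivative - g') (at c within A)"
    using assms(5) by (rule DERIV_minus)
  have "- g y - - g c \<ge> - g' * (y - c)"
    by (rule convex_on_imp_above_tangent[OF convex assms(2-4) deriv])
  then show ?thesis by simp
qed

lemma lipschitz_deriv_secant_bound:
  fixes f f' :: "real \<Rightarrow> real"
  assumes "a \<le> b" "{a..b} \<subseteq> S"
    and deriv: "\<And>y. y \<in> S \<Longrightarrow> (f has_real_derivative f' y) (at y within S)"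
    and lip: "L-lipschitz_on S f'"
    and p: "p \<in> {a..b}"
  shows "\<bar>f b - f a - f' p * (b - a)\<bar> \<le> L * (b - a)\<^sup>2"
proof (cases "a = b")
  case False
  then have "a < b" using \<open>a \<le> b\<close> by simp
  have "\<exists>c\<in>{a<..<b}. f b - f a = f' c * (b - a)"
  proof -
    have "(f has_derivative (\<lambda>h. f' y * h)) (at y within {a..b})" if "a \<le> y" "y \<le> b" for y
      using that assms(2) deriv has_field_derivative_subset
      by (fastforce simp: has_field_derivative_def)
    from mvt_simple[OF \<open>a < b\<close>, of f "\<lambda>y h. f' y * h", OF this] show ?thesis by simp
  qed
  then obtain c where c: "c \<in> {a<..<b}" and mvt: "f b - f a = f' c * (b - a)" by blast
  have "c \<in> S" "p \<in> S"
    using c p assms(2) by auto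
  then have "\<bar>f' c - f' p\<bar> \<le> L * \<bar>c - p\<bar>"
    using lipschitz_onD[OF lip] by (simp add: dist_real_def)
  also have "\<dots> \<le> L * (b - a)"
    using c p lipschitz_on_nonneg[OF lip] by (intro mult_left_mono) auto
  finally have "\<bar>f' c - f' p\<bar> * (b - a) \<le> L * (b - a) * (b - a)"
    using \<open>a \<le> b\<close> by (intro mult_right_mono) auto
  then show ?thesis
    using \<open>a \<le> b\<close> by (simp add: mvt power2_eq_square abs_mult flip: left_diff_distrib)
qed simp

lemma deriv_diff_le_of_concave_approx:
  fixes f g f' :: "real \<Rightarrow> real"
  assumes "h > 0"
    and g_concave: "concave_on {x - h..x + h} g"
    and g_deriv: "(g has_real_derivative dg) (at x within {x - h..x + h})"
    and f_deriv: "\<And>y. y \<in> {x - h..x + h} \<Longrightarrow> (f has_real_derivative f' y) (at y within {x - h..x + h})"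
    and f'_lip: "L-lipschitz_on {x - h..x + h} f'"
    and close: "\<And>a. a \<in> {x - h, x, x + h} \<Longrightarrow> \<bar>f a - g a\<bar> \<le> \<epsilon>"
  shows "\<bar>f' x - dg\<bar> \<le> L * h + 2 * \<epsilon> / h"
proof -
  let ?I = "{x - h..x + h}"
  have f_right: "\<bar>f (x + h) - f x - f' x * h\<bar> \<le> L * h\<^sup>2"
    using lipschitz_deriv_secant_bound[of x "x + h" ?I f f' L x] assms by simp
  have f_left: "\<bar>f x - f (x - h) - f' x * h\<bar> \<le> L * h\<^sup>2"
    using lipschitz_deriv_secant_bound[of "x - h" x ?I f f' L x] assms by simp
  have g_tangent: "g y - g x \<le> dg * (y - x)" if "y \<in> ?I" for y
    using concave_on_imp_below_tangent[OF g_concave _ _ that g_deriv] \<open>h > 0\<close> by simp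
  have g_right: "g (x + h) - g x \<le> dg * h"
    using g_tangent[of "x + h"] \<open>h > 0\<close> by simp
  have g_left: "g (x - h) - g x \<le> - dg * h"
    using g_tangent[of "x - h"] \<open>h > 0\<close> by simp
  have "\<bar>f (x + h) - g (x + h)\<bar> \<le> \<epsilon>" "\<bar>f x - g x\<bar> \<le> \<epsilon>" "\<bar>f (x - h) - g (x - h)\<bar> \<le> \<epsilon>"
    using close by auto
  then have "(f' x - dg) * h \<le> L * h\<^sup>2 + 2 * \<epsilon>" "(dg - f' x) * h \<le> L * h\<^sup>2 + 2 * \<epsilon>"
    using f_right f_left g_right g_left by (auto simp: abs_le_iff algebra_simps)
  then have "\<bar>f' x - dg\<bar> * h \<le> L * h\<^sup>2 + 2 * \<epsilon>"
    by (simp add: abs_if)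
  then show ?thesis
    using \<open>h > 0\<close> by (simp add: field_simps power2_eq_square)
qed

theorem lemma8:
  fixes L \<epsilon> x t :: real and f g f' g' :: "real \<Rightarrow> real"
  assumes "L > 0" and "\<epsilon> > 0"
    and t_def: "t = sqrt (2 * \<epsilon> / L)"
    and g_concave: "concave_on {x - t..x + t} g"
    and g_deriv: "\<And>y. y \<in> {x - t..x + t} \<Longrightarrow> (g has_real_derivative g' y) (at y within {x - t..x + t})"
    and f_deriv: "\<And>y. y \<in> {x - t..x + t} \<Longrightarrow> (f has_real_derivative f' y) (at y within {x - t..x + t})"
    and f'_lip: "L-lipschitz_on {x - t..x + t} f'"
    and close: "\<And>a. a \<in> {x - t, x, x + t} \<Longrightarrow> \<bar>f a - g a\<bar> \<le> \<epsilon>"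
  shows "\<bar>f' x - g' x\<bar> \<le> 2 * sqrt (2 * L * \<epsilon>)"
proof -
  have "t > 0" using assms by simp
  have balance: "L * t\<^sup>2 = 2 * \<epsilon>"
    using assms by (simp add: real_sqrt_pow2)
  have "\<bar>f' x - g' x\<bar> \<le> L * t + 2 * \<epsilon> / t"
    using \<open>t > 0\<close> g_deriv[of x]
    by (intro deriv_diff_le_of_concave_approx[OF _ g_concave _ f_deriv f'_lip close]) auto
  also have "2 * \<epsilon> / t = L * t"
    using \<open>t > 0\<close> by (simp flip: balance add: power2_eq_square)
  also have "L * t = sqrt ((L * t)\<^sup>2)"
    using \<open>L > 0\<close> \<open>t > 0\<close> by simp
  also have "\<dots> = sqrt (L * (L * t\<^sup>2))"
    by (simp add: power2_eq_square algebra_simps)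
  also have "\<dots> = sqrt (2 * L * \<epsilon>)"
    by (simp add: balance)
  finally show ?thesis by simp
qed

end
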